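(* In every instance of the Balancing with Conflicts game with $m=2$ machines, every state $\vec s^*$ minimizing the social cost is a strong Nash equilibrium. In particular, a strong Nash equilibrium always exists and the strong price of stability equals $1$.
   Context: An instance of the Balancing with Conflicts (BwC) game consists of: - players $N=\{1,\dots,n\}$; - machines $M=\{1,\dots,m\}$; - a simple undirected graph $G=(N,E)$. A state is $\vec s\in M^n$, with $X_k(\vec s)=\{i:s_i=k\}$ and $x_k(\vec s)=|X_k(\vec s)|$. For $X\subseteq N$, $e(X)$ is the number of edges with both endpoints in $X$, and $e(\{i\},X)$ is the number of neighbours of $i$ in $X$. The cost of player $i$ with $s_i=k$ is $c_i(\vec s)=x_k(\vec s)+e(\{i\},X_k(\vec s))$. The social cost is $$c(\vec s)=\sum_ic_i(\vec s)=\sum_k\big(x_k(\vec s)^2+2e(X_k(\vec s))\big).$$ A state $\vec s$ is a strong Nash equilibrium if for every nonempty coalition $C\subseteq N$ and every joint deviation $\vec s_C'\in M^C$, some $i\in C$ has $c_i(\vec s)\le c_i(\vec s_C',\vec s_{-C})$. The strong price of stability is the minimum over strong Nash equilibria $\vec s$ of $c(\vec s)/\min_{\vec t}c(\vec t)$. *)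

theory Defs
  imports Complex_Main
begin

text \<open>States are maps s with s i \<in> M for i \<in> N
  (values outside N are irrelevant).\<close>

definition simple_graph :: "nat \<Rightarrow> nat set set \<Rightarrow> bool" where
  "simple_graph n E \<longleftrightarrow> (\<forall>e\<in>E. \<exists>i j. e = {i, j} \<and> i \<noteq> j \<and> i \<in> {1..n} \<and> j \<in> {1..n})"

definition is_state :: "nat \<Rightarrow> nat \<Rightarrow> (nat \<Rightarrow> nat) \<Rightarrow> bool" where
  "is_state n m s \<longleftrightarrow> (\<forall>i\<in>{1..n}. s i \<in> {1..m})"

definition machine_set :: "nat \<Rightarrow> (nat \<Rightarrow> nat) \<Rightarrow> nat \<Rightarrow> nat set" where
  "machine_set n s k = {i\<in>{1..n}. s i = k}"

definition load :: "nat \<Rightarrow> (nat \<Rightarrow> nat) \<Rightarrow> nat \<Rightarrow> nat" where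
  "load n s k = card (machine_set n s k)"

definition nbrs_in :: "nat set set \<Rightarrow> nat \<Rightarrow> nat set \<Rightarrow> nat" where
  "nbrs_in E i X = card {j\<in>X. {i, j} \<in> E}"

definition player_cost :: "nat \<Rightarrow> nat set set \<Rightarrow> (nat \<Rightarrow> nat) \<Rightarrow> nat \<Rightarrow> nat" where
  "player_cost n E s i = load n s (s i) + nbrs_in E i (machine_set n s (s i))"

definition social_cost :: "nat \<Rightarrow> nat set set \<Rightarrow> (nat \<Rightarrow> nat) \<Rightarrow> nat" where
  "social_cost n E s = (\<Sum>i\<in>{1..n}. player_cost n E s i)"

definition strong_NE :: "nat \<Rightarrow> nat \<Rightarrow> nat set set \<Rightarrow> (nat \<Rightarrow> nat) \<Rightarrow> bool" where
  "strong_NE n m E s \<longleftrightarrow> is_state n m s \<and>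
     (\<forall>C t. C \<subseteq> {1..n} \<and> C \<noteq> {} \<and> is_state n m t \<and> (\<forall>i\<in>{1..n} - C. t i = s i)
        \<longrightarrow> (\<exists>i\<in>C. player_cost n E s i \<le> player_cost n E t i))"

definition opt_cost :: "nat \<Rightarrow> nat \<Rightarrow> nat set set \<Rightarrow> nat" where
  "opt_cost n m E = Min {social_cost n E t | t. is_state n m t}"

definition strong_PoS :: "nat \<Rightarrow> nat \<Rightarrow> nat set set \<Rightarrow> real" where
  "strong_PoS n m E = Min {real (social_cost n E s) / real (opt_cost n m E) | s. strong_NE n m E s}"

end

theory Submission
  imports Defs
begin

(* Write the cost of player i as a sum over all players j on the
   same machine of the pair weight w(i,j) = 1 + [ij is an edge].  The social
   cost is then a double sum of pair terms, and for a deviation from s to t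
   the change is a double sum of pair differences g(i,j).  With only two
   machines, two players that both moved (or both stayed) are together in t
   iff they were together in s, so g(i,j) vanishes unless exactly one of i, j
   belongs to the set D of movers; by symmetry of g the change in social cost
   is therefore TWICE the total change of the movers' own costs.  If a
   coalition improved every member, the social cost would strictly drop, so a
   social optimum is a strong Nash equilibrium.  Existence of an optimum
   (costs are natural numbers) and positivity of the optimal cost then give
   the remaining two claims: an SNE exists and the strong price of stability
   is 1. *)

text \<open>Cost player i incurs from sharing a machine with j (including j = i).\<close>
definition pair_weight :: "nat set set \<Rightarrow> nat \<Rightarrow> nat \<Rightarrow> nat" where
  "pair_weight E i j = 1 + (if {i, j} \<in> E then 1 else 0)"

lemma pair_weight_sym: "pair_weight E i j = pair_weight E j i"
  unfolding pair_weight_def by (simp add: insert_commute)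

text \<open>The load term counts co-located players, the conflict term co-located neighbours.\<close>
lemma player_cost_as_sum:
  "player_cost n E s i = (\<Sum>j\<in>{1..n}. if s j = s i then pair_weight E i j else 0)"
proof -
  have load: "load n s (s i) = (\<Sum>j\<in>{1..n}. if s j = s i then 1 else 0)"
    unfolding load_def machine_set_def by (simp add: sum.inter_filter[symmetric])
  have nbrs_set: "{j \<in> machine_set n s (s i). {i, j} \<in> E} = {j\<in>{1..n}. s j = s i \<and> {i, j} \<in> E}"
    unfolding machine_set_def by auto
  have nbrs: "nbrs_in E i (machine_set n s (s i))
      = (\<Sum>j\<in>{1..n}. if s j = s i \<and> {i, j} \<in> E then 1 else 0)"
    unfolding nbrs_in_def nbrs_set by (simp add: sum.inter_filter[symmetric])
  show ?thesis unfolding player_cost_def load nbrs pair_weight_def sum.distrib[symmetric]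
    by (rule sum.cong) auto
qed

text \<open>Every pair weight is at most 2, so a player pays at most 2n.\<close>
lemma player_cost_le: "player_cost n E s i \<le> 2 * n"
proof -
  have "player_cost n E s i \<le> (\<Sum>j\<in>{1..n}. 2)"
    unfolding player_cost_as_sum by (intro sum_mono) (auto simp: pair_weight_def)
  thus ?thesis by simp
qed

lemma social_cost_le: "social_cost n E s \<le> n * (2 * n)"
proof -
  have "social_cost n E s \<le> (\<Sum>i\<in>{1..n}. 2 * n)"
    unfolding social_cost_def by (intro sum_mono player_cost_le)
  thus ?thesis by simp
qed

text \<open>Player 1 always pays at least for itself, so the social cost is positive.\<close>
lemma social_cost_pos:
  assumes "n \<ge> 1" shows "social_cost n E s \<ge> 1"
proof -
  have "1 \<le> pair_weight E 1 1" by (simp add: pair_weight_def)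
  also have "\<dots> \<le> player_cost n E s 1" unfolding player_cost_as_sum
    using member_le_sum[of 1 "{1..n}" "\<lambda>j. if s j = s 1 then pair_weight E 1 j else 0"] assms
    by simp
  also have "\<dots> \<le> social_cost n E s" unfolding social_cost_def
    using member_le_sum[of 1 "{1..n}" "player_cost n E s"] assms by simp
  finally show ?thesis .
qed

lemma double_sum_cut:
  fixes g :: "'a \<Rightarrow> 'a \<Rightarrow> 'b::comm_ring_1"
  assumes fin: "finite N" and DN: "D \<subseteq> N"
    and sym: "\<And>i j. g i j = g j i"
    and same_side: "\<And>i j. i \<in> N \<Longrightarrow> j \<in> N \<Longrightarrow> (i \<in> D \<longleftrightarrow> j \<in> D) \<Longrightarrow> g i j = 0"
  shows "(\<Sum>i\<in>N. \<Sum>j\<in>N. g i j) = 2 * (\<Sum>i\<in>D. \<Sum>j\<in>N. g i j)"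
proof -
  have split: "(\<Sum>i\<in>N. h i) = (\<Sum>i\<in>D. h i) + (\<Sum>i\<in>N-D. h i)" for h :: "'a \<Rightarrow> 'b"
    using sum.subset_diff[OF DN fin, of h] by (simp add: add.commute)
  have row_in_D: "(\<Sum>j\<in>N. g i j) = (\<Sum>j\<in>N-D. g i j)" if "i \<in> D" for i
    using split[of "g i"] same_side[of i] that DN by (simp add: subset_iff)
  have row_outside_D: "(\<Sum>j\<in>N. g i j) = (\<Sum>j\<in>D. g i j)" if "i \<in> N - D" for i
  proof -
    have "(\<Sum>j\<in>N-D. g i j) = 0" using same_side[of i] that by (intro sum.neutral) auto
    thus ?thesis using split[of "g i"] by simp
  qed
  have swap: "(\<Sum>i\<in>N-D. \<Sum>j\<in>D. g i j) = (\<Sum>i\<in>D. \<Sum>j\<in>N-D. g i j)"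
    by (subst sum.swap) (simp add: sym)
  have "(\<Sum>i\<in>N. \<Sum>j\<in>N. g i j) = (\<Sum>i\<in>D. \<Sum>j\<in>N-D. g i j) + (\<Sum>i\<in>N-D. \<Sum>j\<in>D. g i j)"
    using split[of "\<lambda>i. \<Sum>j\<in>N. g i j"] row_in_D row_outside_D by simp
  also have "\<dots> = 2 * (\<Sum>i\<in>D. \<Sum>j\<in>N. g i j)" using swap row_in_D by simp
  finally show ?thesis .
qed

text \<open>With two machines, moving both or neither of two players preserves whether
  they share a machine.  This is the only place where m = 2 is used.\<close>
lemma two_machines_colocation:
  assumes "is_state n 2 s" "is_state n 2 t" "i \<in> {1..n}" "j \<in> {1..n}"
    and "(t i = s i) \<longleftrightarrow> (t j = s j)"
  shows "(t j = t i) \<longleftrightarrow> (s j = s i)"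
proof -
  have "s i \<in> {1,2}" "s j \<in> {1,2}" "t i \<in> {1,2}" "t j \<in> {1,2}"
    using assms(1-4) unfolding is_state_def by fastforce+
  thus ?thesis using assms(5) by auto
qed

lemma social_cost_change:
  assumes s: "is_state n 2 s" and t: "is_state n 2 t"
  shows "int (social_cost n E t) - int (social_cost n E s)
     = 2 * (\<Sum>i\<in>{i\<in>{1..n}. t i \<noteq> s i}. int (player_cost n E t i) - int (player_cost n E s i))"
proof -
  define g where "g i j = int (if t j = t i then pair_weight E i j else 0)
                        - int (if s j = s i then pair_weight E i j else 0)" for i j
  have row: "int (player_cost n E t i) - int (player_cost n E s i) = (\<Sum>j\<in>{1..n}. g i j)" for i
    unfolding player_cost_as_sum g_def by (simp add: sum_subtractf)
  have "int (social_cost n E t) - int (social_cost n E s) = (\<Sum>i\<in>{1..n}. \<Sum>j\<in>{1..n}. g i j)"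
    unfolding social_cost_def using row by (simp add: sum_subtractf[symmetric])
  also have "\<dots> = 2 * (\<Sum>i\<in>{i\<in>{1..n}. t i \<noteq> s i}. \<Sum>j\<in>{1..n}. g i j)"
  proof (rule double_sum_cut)
    show "g i j = g j i" for i j
      unfolding g_def by (simp add: pair_weight_sym eq_commute)
    show "g i j = 0" if "i \<in> {1..n}" "j \<in> {1..n}"
      "(i \<in> {i\<in>{1..n}. t i \<noteq> s i}) = (j \<in> {i\<in>{1..n}. t i \<noteq> s i})" for i j
      using two_machines_colocation[OF s t that(1,2)] that unfolding g_def by auto
  qed auto
  finally show ?thesis using row by simp
qed

lemma optimum_is_strong_NE:
  assumes s: "is_state n 2 s"
    and opt: "\<forall>t. is_state n 2 t \<longrightarrow> social_cost n E s \<le> social_cost n E t"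
  shows "strong_NE n 2 E s"
  unfolding strong_NE_def
proof (intro conjI allI impI)
  show "is_state n 2 s" by fact
  fix C t assume h: "C \<subseteq> {1..n} \<and> C \<noteq> {} \<and> is_state n 2 t \<and> (\<forall>i\<in>{1..n} - C. t i = s i)"
  show "\<exists>i\<in>C. player_cost n E s i \<le> player_cost n E t i"
  proof (rule ccontr)
    assume "\<not> ?thesis"
    hence better: "\<And>i. i \<in> C \<Longrightarrow> player_cost n E t i < player_cost n E s i" by auto
    define D where "D = {i\<in>{1..n}. t i \<noteq> s i}"
    have DC: "D \<subseteq> C" using h unfolding D_def by auto
    have "D \<noteq> {}"
    proof
      assume "D = {}"
      hence "\<forall>j\<in>{1..n}. t j = s j" unfolding D_def by auto
      moreover obtain i where "i \<in> C" using h by auto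
      ultimately have "i \<in> C" "player_cost n E t i = player_cost n E s i"
        using h unfolding player_cost_as_sum by (auto intro: sum.cong)
      thus False using better by fastforce
    qed
    moreover have "finite D" unfolding D_def by auto
    ultimately have "(\<Sum>i\<in>D. int (player_cost n E t i) - int (player_cost n E s i)) < 0"
      using sum_strict_mono[of D "\<lambda>i. int (player_cost n E t i) - int (player_cost n E s i)" "\<lambda>_. 0"]
        better DC by auto
    hence "social_cost n E t < social_cost n E s"
      using social_cost_change[OF s, of t E] h unfolding D_def by linarith
    thus False using opt h by force
  qed
qed

text \<open>Social costs are natural numbers, so some state attains the minimum.\<close>
lemma optimum_exists:
  obtains s where "is_state n 2 s" "\<forall>t. is_state n 2 t \<longrightarrow> social_cost n E s \<le> social_cost n E t"
proof -
  have "is_state n 2 (\<lambda>_. 1)" unfolding is_state_def by auto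
  thus ?thesis
    using ex_has_least_nat[of "is_state n 2" "\<lambda>_. 1" "social_cost n E"] that by blast
qed

lemma opt_cost_eq:
  assumes "is_state n 2 s" "\<forall>t. is_state n 2 t \<longrightarrow> social_cost n E s \<le> social_cost n E t"
  shows "opt_cost n 2 E = social_cost n E s"
proof -
  have "finite {social_cost n E t | t. is_state n 2 t}"
    by (rule finite_subset[of _ "{..n*(2*n)}"]) (auto simp: social_cost_le)
  thus ?thesis unfolding opt_cost_def by (rule Min_eqI) (use assms in auto)
qed

text \<open>A cost-minimal strong NE has ratio 1, and no state has ratio below 1.\<close>
lemma strong_PoS_eq_1:
  assumes "n \<ge> 1" and s: "is_state n 2 s"
    and opt: "\<forall>t. is_state n 2 t \<longrightarrow> social_cost n E s \<le> social_cost n E t"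
  shows "strong_PoS n 2 E = 1"
proof -
  let ?ratios = "{real (social_cost n E s) / real (opt_cost n 2 E) | s. strong_NE n 2 E s}"
  have opt_eq: "opt_cost n 2 E = social_cost n E s" using opt_cost_eq[OF s opt] .
  have opt_pos: "real (opt_cost n 2 E) > 0" using opt_eq social_cost_pos[OF assms(1), of E s] by simp
  have "finite ?ratios"
    by (rule finite_subset[of _ "(\<lambda>k. real k / real (opt_cost n 2 E)) ` {..n*(2*n)}"])
      (auto simp: social_cost_le)
  thus ?thesis unfolding strong_PoS_def
  proof (rule Min_eqI)
    fix y assume "y \<in> ?ratios"
    then obtain s' where y: "y = real (social_cost n E s') / real (opt_cost n 2 E)"
      and "strong_NE n 2 E s'" by auto
    hence "real (opt_cost n 2 E) \<le> real (social_cost n E s')"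
      using opt opt_eq unfolding strong_NE_def by simp
    thus "1 \<le> y" using opt_pos y by simp
  next
    show "1 \<in> ?ratios"
      using optimum_is_strong_NE[OF s opt] opt_pos opt_eq by (intro CollectI exI[of _ s]) simp
  qed
qed

theorem theorem13:
  fixes n :: nat and E :: "nat set set"
  assumes "n \<ge> 1" and "simple_graph n E"
  shows "(\<forall>s. is_state n 2 s \<and> (\<forall>t. is_state n 2 t \<longrightarrow> social_cost n E s \<le> social_cost n E t)
            \<longrightarrow> strong_NE n 2 E s)
         \<and> (\<exists>s. strong_NE n 2 E s)
         \<and> strong_PoS n 2 E = 1"
proof -
  obtain s0 where s0: "is_state n 2 s0"
    and opt: "\<forall>t. is_state n 2 t \<longrightarrow> social_cost n E s0 \<le> social_cost n E t"
    using optimum_exists by blast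
  show ?thesis
    using optimum_is_strong_NE optimum_is_strong_NE[OF s0 opt] strong_PoS_eq_1[OF assms(1) s0 opt]
    by blast
qed

end
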